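(* Let $0<m<L$, $\alpha>0$, and $\rho \ge \rho_\mathrm{GD}:=\max(1-\alpha m,\ \alpha L-1)$. Let \[ M=\begin{bmatrix} -2Lm\, I & (L+m)I\\ (L+m)I & -2I\end{bmatrix}\in\mathbb{R}^{2n\times 2n}. \] Then $(I,-\alpha I, M)$ is $\rho$-hyperstable, i.e. there exists $c>0$ such that $|x(k)|\le c\rho^k|x(0)|$ for all $k\ge0$ whenever the sequences $x(k),u(k)\in\mathbb{R}^n$ satisfy $x(k+1)=x(k)-\alpha u(k)$ for all $k$ and \[ \sum_{k=0}^N\rho^{-2k}\langle L x(k)-u(k),\ u(k)-m x(k)\rangle\ \ge\ 0 \quad\text{for all } N\ge0. \]
   Context: Here $M$ is the sector-IQC matrix obtained from the general construction $M=\begin{bmatrix}-2LmC^*C&(L+m)C^*\\(L+m)C&-2I\end{bmatrix}$ with $C=I$; the quadratic constraint associated with $M$ is $2\sum_k\rho^{-2k}\langle Lx(k)-u(k),u(k)-mx(k)\rangle\ge0$. *)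

theory Defs
  imports "HOL-Analysis.Analysis"
begin

end

theory Submission
  imports Defs
begin

text \<open>
  Write p = L x - u and q = u - m x for the two sector factors, and let
  a = sqrt (rho^2 - (1 - alpha m)^2), b = sqrt (rho^2 - (1 - alpha L)^2); both are real precisely
  because rho is at least max (1 - alpha m) (alpha L - 1). For one gradient step x' = x - alpha u
  the identity
    (L - m)^2 (rho^2 |x|^2 - |x'|^2) = ((L - m)^2 alpha^2 + (a + b)^2) <p, q> + |a p - b q|^2
  gives |x'|^2 + mu <p, q> <= rho^2 |x|^2 with mu >= 0. Hence the storage function
  |x k|^2 / rho^(2k) drops at each step by at least mu / rho^2 times the weighted supply
  <p k, q k> / rho^(2k), and since the partial sums of the supply are nonnegative, telescoping
  bounds the storage by its initial value: |x k| <= rho^k |x 0|.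
\<close>

lemma sector_gradient_step_identity:
  fixes x u :: "'a::real_inner" and m L alpha rho a b :: real
  assumes "a\<^sup>2 = rho\<^sup>2 - (1 - alpha * m)\<^sup>2" and "b\<^sup>2 = rho\<^sup>2 - (1 - alpha * L)\<^sup>2"
  shows "((L - m)\<^sup>2 * alpha\<^sup>2 + (a + b)\<^sup>2) * ((L *\<^sub>R x - u) \<bullet> (u - m *\<^sub>R x))
           + (norm (a *\<^sub>R (L *\<^sub>R x - u) - b *\<^sub>R (u - m *\<^sub>R x)))\<^sup>2
         = (L - m)\<^sup>2 * (rho\<^sup>2 * (norm x)\<^sup>2 - (norm (x - alpha *\<^sub>R u))\<^sup>2)"
proof -
  have expand:
    "(L *\<^sub>R x - u) \<bullet> (u - m *\<^sub>R x) = (L + m) * (x \<bullet> u) - L * m * (x \<bullet> x) - u \<bullet> u"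
    "(norm (a *\<^sub>R (L *\<^sub>R x - u) - b *\<^sub>R (u - m *\<^sub>R x)))\<^sup>2
       = (a * L + b * m)\<^sup>2 * (x \<bullet> x) - 2 * (a * L + b * m) * (a + b) * (x \<bullet> u)
         + (a + b)\<^sup>2 * (u \<bullet> u)"
    "(norm (x - alpha *\<^sub>R u))\<^sup>2 = x \<bullet> x - 2 * alpha * (x \<bullet> u) + alpha\<^sup>2 * (u \<bullet> u)"
    unfolding power2_norm_eq_inner
    by (simp_all add: inner_commute algebra_simps power2_eq_square)
  show ?thesis
    unfolding expand power2_norm_eq_inner[symmetric] using assms by algebra
qed

lemma sector_gradient_step_dissipation:
  fixes m L alpha rho :: real
  assumes "m < L" and "\<bar>1 - alpha * m\<bar> \<le> rho" and "\<bar>1 - alpha * L\<bar> \<le> rho"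
  obtains mu where "mu \<ge> 0"
    and "\<And>x u :: 'a::real_inner.
           (norm (x - alpha *\<^sub>R u))\<^sup>2 + mu * ((L *\<^sub>R x - u) \<bullet> (u - m *\<^sub>R x)) \<le> rho\<^sup>2 * (norm x)\<^sup>2"
proof
  define a where "a = sqrt (rho\<^sup>2 - (1 - alpha * m)\<^sup>2)"
  define b where "b = sqrt (rho\<^sup>2 - (1 - alpha * L)\<^sup>2)"
  have "rho \<ge> 0"
    using assms(2) by linarith
  then have "(1 - alpha * m)\<^sup>2 \<le> rho\<^sup>2" and "(1 - alpha * L)\<^sup>2 \<le> rho\<^sup>2"
    using assms(2,3) by (simp_all add: power2_le_iff_abs_le)
  then have a2: "a\<^sup>2 = rho\<^sup>2 - (1 - alpha * m)\<^sup>2" and b2: "b\<^sup>2 = rho\<^sup>2 - (1 - alpha * L)\<^sup>2"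
    unfolding a_def b_def by simp_all
  have Lm: "(L - m)\<^sup>2 > 0"
    using assms(1) by simp
  show "alpha\<^sup>2 + (a + b)\<^sup>2 / (L - m)\<^sup>2 \<ge> 0"
    by simp
  fix x u :: 'a
  have "((L - m)\<^sup>2 * alpha\<^sup>2 + (a + b)\<^sup>2) * ((L *\<^sub>R x - u) \<bullet> (u - m *\<^sub>R x))
        \<le> (L - m)\<^sup>2 * (rho\<^sup>2 * (norm x)\<^sup>2 - (norm (x - alpha *\<^sub>R u))\<^sup>2)"
    using sector_gradient_step_identity[OF a2 b2, of x u]
    by (metis le_add_same_cancel1 zero_le_power2)
  then show "(norm (x - alpha *\<^sub>R u))\<^sup>2
          + (alpha\<^sup>2 + (a + b)\<^sup>2 / (L - m)\<^sup>2) * ((L *\<^sub>R x - u) \<bullet> (u - m *\<^sub>R x))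
        \<le> rho\<^sup>2 * (norm x)\<^sup>2"
    using Lm by (simp add: field_simps)
qed

lemma dissipation_telescope:
  fixes V s :: "nat \<Rightarrow> real" and c :: real
  assumes step: "\<And>k. V (Suc k) + c * s k \<le> V k"
    and "c \<ge> 0" and rate_sum: "\<And>N. (\<Sum>k\<le>N. s k) \<ge> 0"
  shows "V k \<le> V 0"
proof (cases k)
  case (Suc N)
  have "V (Suc N) + c * (\<Sum>k\<le>N. s k) \<le> V 0"
  proof (induction N)
    case 0
    then show ?case using step[of 0] by simp
  next
    case (Suc N)
    then show ?case using step[of "Suc N"] by (simp add: distrib_left)
  qed
  moreover have "c * (\<Sum>k\<le>N. s k) \<ge> 0"
    using \<open>c \<ge> 0\<close> rate_sum by simp
  ultimately show ?thesis
    using Suc by simp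
qed simp

lemma exponential_bound_from_dissipation:
  fixes x :: "nat \<Rightarrow> 'a::real_normed_vector" and s :: "nat \<Rightarrow> real" and rho mu :: real
  assumes "rho > 0" and "mu \<ge> 0"
    and step: "\<And>k. (norm (x (Suc k)))\<^sup>2 + mu * s k \<le> rho\<^sup>2 * (norm (x k))\<^sup>2"
    and rate_sum: "\<And>N. (\<Sum>k\<le>N. s k / rho ^ (2 * k)) \<ge> 0"
  shows "norm (x k) \<le> rho ^ k * norm (x 0)"
proof -
  define V where "V k = (norm (x k))\<^sup>2 / rho ^ (2 * k)" for k
  have V_step: "V (Suc k) + mu / rho\<^sup>2 * (s k / rho ^ (2 * k)) \<le> V k" for k
  proof -
    have "V (Suc k) + mu / rho\<^sup>2 * (s k / rho ^ (2 * k))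
          = ((norm (x (Suc k)))\<^sup>2 + mu * s k) / (rho\<^sup>2 * rho ^ (2 * k))"
      unfolding V_def by (simp add: power_add power2_eq_square add_divide_distrib)
    also have "\<dots> \<le> rho\<^sup>2 * (norm (x k))\<^sup>2 / (rho\<^sup>2 * rho ^ (2 * k))"
      using step \<open>rho > 0\<close> by (intro divide_right_mono) simp_all
    also have "\<dots> = V k"
      unfolding V_def using \<open>rho > 0\<close> by simp
    finally show ?thesis .
  qed
  then have "V k \<le> V 0"
    using dissipation_telescope[OF V_step _ rate_sum] \<open>mu \<ge> 0\<close> by simp
  then have "(norm (x k))\<^sup>2 \<le> (norm (x 0))\<^sup>2 * rho ^ (2 * k)"
    unfolding V_def using \<open>rho > 0\<close> by (simp add: divide_le_eq)
  also have "\<dots> = (rho ^ k * norm (x 0))\<^sup>2"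
    unfolding power_mult_distrib power_even_eq by (rule mult.commute)
  finally show ?thesis
    by (rule power2_le_imp_le) (use \<open>rho > 0\<close> in simp)
qed

theorem lemma2p8:
  fixes m L alpha rho :: real
  assumes "0 < m" and "m < L" and "0 < alpha"
    and "rho \<ge> max (1 - alpha * m) (alpha * L - 1)"
  shows "\<exists>c>0. \<forall>(x :: nat \<Rightarrow> real ^ 'n) (u :: nat \<Rightarrow> real ^ 'n).
           (\<forall>k. x (Suc k) = x k - alpha *\<^sub>R u k) \<and>
           (\<forall>N. (\<Sum>k\<le>N. (L *\<^sub>R x k - u k) \<bullet> (u k - m *\<^sub>R x k) / rho ^ (2 * k)) \<ge> 0)
           \<longrightarrow> (\<forall>k. norm (x k) \<le> c * rho ^ k * norm (x 0))"
proof -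
  have "alpha * m < alpha * L"
    using assms(2,3) by simp
  then have "rho > 0" and "\<bar>1 - alpha * m\<bar> \<le> rho" and "\<bar>1 - alpha * L\<bar> \<le> rho"
    using assms(4) by auto
  obtain mu where "mu \<ge> 0" and dissipation:
    "\<And>x u :: real ^ 'n.
       (norm (x - alpha *\<^sub>R u))\<^sup>2 + mu * ((L *\<^sub>R x - u) \<bullet> (u - m *\<^sub>R x)) \<le> rho\<^sup>2 * (norm x)\<^sup>2"
    using sector_gradient_step_dissipation[OF assms(2) \<open>\<bar>1 - alpha * m\<bar> \<le> rho\<close>
        \<open>\<bar>1 - alpha * L\<bar> \<le> rho\<close>] by blast
  show ?thesis
  proof (intro exI[of _ 1] conjI allI impI)
    fix x u :: "nat \<Rightarrow> real ^ 'n" and k :: nat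
    assume "(\<forall>k. x (Suc k) = x k - alpha *\<^sub>R u k) \<and>
      (\<forall>N. (\<Sum>k\<le>N. (L *\<^sub>R x k - u k) \<bullet> (u k - m *\<^sub>R x k) / rho ^ (2 * k)) \<ge> 0)"
    then have "norm (x k) \<le> rho ^ k * norm (x 0)"
      using exponential_bound_from_dissipation[OF \<open>rho > 0\<close> \<open>mu \<ge> 0\<close>, of x
          "\<lambda>k. (L *\<^sub>R x k - u k) \<bullet> (u k - m *\<^sub>R x k)"] dissipation
      by simp
    then show "norm (x k) \<le> 1 * rho ^ k * norm (x 0)"
      by simp
  qed simp
qed

end
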